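(* Let $p$ be an odd prime and let $0<r,s<p$ be integers with $r+s\neq p$. Then \[ b_{r,s}(\alpha)=\sum_{k=0}^{p-1}(-r/s)^k\binom{r\alpha-1}{p-1-k}\binom{s\alpha}{k} \] in $\mathbb F_p[\alpha]$.
   Context: $\mathbb F_p$ is the field of $p$ elements, $\alpha$ an indeterminate, $\binom{x}{m}=x(x-1)\cdots(x-m+1)/m!$. For integers $0<r,s<p$ (interpreted as elements of $\mathbb F_p$), $b_{r,s}(\alpha)$ is defined as $b_{r,s}(\alpha)=\sum_{k=0}^{p-1}(-r/s)^k\binom{r\alpha-1}{p-1-k}\binom{s\alpha-1}{k}\in\mathbb F_p[\alpha]$. *)

theory Defs
  imports "Berlekamp_Zassenhaus.Finite_Field" "HOL-Computational_Algebra.Polynomial"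
begin

text \<open>F_p is modelled as the type 'p mod_ring with CARD('p) = p prime; the
indeterminate alpha is the polynomial variable [:0,1:].\<close>

definition pbinom :: "'a::field poly \<Rightarrow> nat \<Rightarrow> 'a poly" where
  "pbinom x m = smult (inverse (of_nat (fact m))) (\<Prod>i<m. x - of_nat i)"

definition b_rs :: "nat \<Rightarrow> nat \<Rightarrow> 'p::prime_card mod_ring poly" where
  "b_rs r s = (\<Sum>k = 0..CARD('p) - 1.
      [:(- (of_nat r / of_nat s)) ^ k:]
      * pbinom (smult (of_nat r) [:0, 1:] - 1) (CARD('p) - 1 - k)
      * pbinom (smult (of_nat s) [:0, 1:] - 1) k)"

end

theory Submission
  imports Defs "Berlekamp_Zassenhaus.Berlekamp_Type_Based"
begin

text \<open>Write \<open>X = r\<alpha> - 1\<close>, \<open>Y = s\<alpha> - 1\<close> and \<open>c = -r/s\<close>. Pascal's rule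
\<open>binom(Y + 1, k) = binom(Y, k) + binom(Y, k - 1)\<close>, valid for \<open>k < p\<close>, shows that the two
sides differ by \<open>c\<close> times \<open>\<Sum>\<^sub>j c^j binom(X, p-2-j) binom(Y, j)\<close>, so it suffices that
this sum vanishes. Up to the unit \<open>(p-2)!\<close> it is the binomial convolution \<open>F(p-2)\<close> of the
falling factorials \<open>(X)\<^sub>n\<close> and \<open>c^n (Y)\<^sub>n\<close>. Shifting \<open>X, Y\<close> to \<open>X + 1 = r\<alpha>\<close>,
\<open>Y + 1 = s\<alpha>\<close> gives the recurrence
\<open>F\<^sup>+(m+1) = (X + 1 + c(Y + 1)) F(m) + c(X + Y + 2) m F(m-1)\<close>, whose first coefficient
\<open>(r + cs)\<alpha>\<close> is zero. In characteristic \<open>p\<close> the convolution of index \<open>p\<close> collapses to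
\<open>(r\<alpha>)\<^sub>p + c^p (s\<alpha>)\<^sub>p = (r + cs)(\<alpha>)\<^sub>p = 0\<close>, so taking \<open>m = p - 1\<close> leaves
\<open>c (r + s) \<alpha> (p-1) F(p-2) = 0\<close>, whence \<open>F(p-2) = 0\<close> as \<open>r + s \<noteq> 0\<close> in \<open>\<bbbF>\<^sub>p\<close>.\<close>

definition ffact :: "'a::comm_ring_1 \<Rightarrow> nat \<Rightarrow> 'a" where
  "ffact x n = (\<Prod>i<n. x - of_nat i)"

lemma ffact_0 [simp]: "ffact x 0 = 1"
  by (simp add: ffact_def)

lemma ffact_Suc: "ffact x (Suc n) = x * ffact (x - 1) n"
  unfolding ffact_def prod.lessThan_Suc_shift by (simp add: algebra_simps)

lemma ffact_Suc_right: "ffact x (Suc n) = ffact x n * (x - of_nat n)"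
  by (simp add: ffact_def)

lemma ffact_plus_one: "ffact (x + 1) n = ffact x n + of_nat n * ffact x (n - 1)"
proof (cases n)
  case (Suc m)
  have "ffact (x + 1) (Suc m) = ffact x m * (x - of_nat m) + of_nat (Suc m) * ffact x m"
    by (simp add: ffact_Suc algebra_simps)
  then show ?thesis
    using Suc by (simp add: ffact_Suc_right)
qed simp

text \<open>The coefficients of the product of the exponential generating functions of \<open>a\<close> and \<open>b\<close>.\<close>

definition binomial_conv :: "(nat \<Rightarrow> 'a::comm_ring_1) \<Rightarrow> (nat \<Rightarrow> 'a) \<Rightarrow> nat \<Rightarrow> 'a" where
  "binomial_conv a b n = (\<Sum>j\<le>n. of_nat (n choose j) * a (n - j) * b j)"

lemma binomial_conv_commute: "binomial_conv a b n = binomial_conv b a n"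
proof -
  have "binomial_conv a b n = (\<Sum>j=0..n. of_nat (n choose (n - j)) * a (n - (n - j)) * b (n - j))"
    unfolding binomial_conv_def atLeast0AtMost[symmetric] by (subst sum.atLeastAtMost_rev) simp
  also have "\<dots> = binomial_conv b a n"
    unfolding binomial_conv_def atLeast0AtMost[symmetric]
    by (intro sum.cong refl) (auto simp: binomial_symmetric[symmetric] algebra_simps)
  finally show ?thesis .
qed

lemma binomial_conv_scale_left: "binomial_conv (\<lambda>k. u * a k) b n = u * binomial_conv a b n"
  by (simp add: binomial_conv_def sum_distrib_left algebra_simps)

lemma binomial_conv_scale_right: "binomial_conv a (\<lambda>k. u * b k) n = u * binomial_conv a b n"
  by (simp add: binomial_conv_def sum_distrib_left algebra_simps)

lemma binomial_conv_add_left: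
  "binomial_conv (\<lambda>k. a k + a' k) b n = binomial_conv a b n + binomial_conv a' b n"
  by (simp add: binomial_conv_def sum.distrib algebra_simps)

lemma binomial_conv_add_right:
  "binomial_conv a (\<lambda>k. b k + b' k) n = binomial_conv a b n + binomial_conv a b' n"
  by (simp add: binomial_conv_def sum.distrib algebra_simps)

lemma binomial_conv_Suc:
  "binomial_conv a b (Suc n) =
     binomial_conv (\<lambda>k. a (Suc k)) b n + binomial_conv a (\<lambda>k. b (Suc k)) n"
proof -
  have "binomial_conv a b (Suc n) = a (Suc n) * b 0 +
     (\<Sum>j\<le>n. of_nat (Suc n choose Suc j) * a (n - j) * b (Suc j))"
    unfolding binomial_conv_def by (subst sum.atMost_Suc_shift) simp
  also have "(\<Sum>j\<le>n. of_nat (Suc n choose Suc j) * a (n - j) * b (Suc j)) =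
     (\<Sum>j\<le>n. of_nat (n choose j) * a (n - j) * b (Suc j)) +
     (\<Sum>j\<le>n. of_nat (n choose Suc j) * a (n - j) * b (Suc j))"
    by (simp add: sum.distrib algebra_simps)
  also have "(\<Sum>j\<le>n. of_nat (n choose Suc j) * a (n - j) * b (Suc j)) =
     (\<Sum>j<n. of_nat (n choose Suc j) * a (n - j) * b (Suc j))"
    by (simp add: lessThan_Suc_atMost[symmetric] binomial_eq_0)
  moreover have "binomial_conv (\<lambda>k. a (Suc k)) b n = a (Suc n) * b 0 +
     (\<Sum>j<n. of_nat (n choose Suc j) * a (n - j) * b (Suc j))"
    unfolding binomial_conv_def
    by (subst sum.atMost_shift) (auto intro!: sum.cong simp: Suc_diff_Suc)
  ultimately show ?thesis
    by (simp add: binomial_conv_def algebra_simps)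
qed

lemma binomial_conv_shift_left:
  "binomial_conv (\<lambda>k. of_nat k * a (k - 1)) b n = of_nat n * binomial_conv a b (n - 1)"
proof (cases n)
  case (Suc m)
  have absorb: "of_nat (Suc m) * of_nat (m choose j) * a (m - j) * b j =
      of_nat (Suc m choose j) * (of_nat (Suc m - j) * a (Suc m - j - 1)) * b j" for j
  proof -
    have "Suc m * (m choose j) = (Suc m - j) * (Suc m choose j)"
      using binomial_absorb_comp[of "Suc m" j] by simp
    then have "of_nat (Suc m) * of_nat (m choose j) = (of_nat (Suc m - j) * of_nat (Suc m choose j) :: 'a)"
      by (metis of_nat_mult)
    then show ?thesis
      by (simp add: algebra_simps)
  qed
  have "of_nat (Suc m) * binomial_conv a b m =
      (\<Sum>j\<le>Suc m. of_nat (Suc m) * of_nat (m choose j) * a (m - j) * b j)"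
    by (simp add: binomial_conv_def binomial_eq_0 sum_distrib_left mult.assoc)
  also have "\<dots> = binomial_conv (\<lambda>k. of_nat k * a (k - 1)) b (Suc m)"
    unfolding binomial_conv_def by (rule sum.cong[OF refl]) (rule absorb)
  finally show ?thesis
    using Suc by simp
qed (simp add: binomial_conv_def)

lemma binomial_conv_shift_right:
  "binomial_conv a (\<lambda>k. of_nat k * b (k - 1)) n = of_nat n * binomial_conv a b (n - 1)"
  by (subst binomial_conv_commute, subst binomial_conv_shift_left, subst binomial_conv_commute) (rule refl)

lemma binomial_conv_prime_char:
  assumes "prime p" and "(of_nat p :: 'a::comm_ring_1) = 0"
  shows "binomial_conv a b p = a p * b 0 + a 0 * (b p :: 'a)"
proof -
  let ?g = "\<lambda>j. of_nat (p choose j) * a (p - j) * b j"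
  have "?g j = 0" if "0 < j" "j < p" for j
  proof -
    have "p dvd (p choose j)"
      using dvd_choose_prime[of j p] that assms(1) by auto
    then show ?thesis
      using assms(2) by (metis dvdE mult_zero_left of_nat_mult)
  qed
  then have "binomial_conv a b p = sum ?g {0, p}"
    unfolding binomial_conv_def by (intro sum.mono_neutral_right) auto
  moreover have "p \<noteq> 0"
    using assms(1) by auto
  ultimately show ?thesis
    by simp
qed

lemma binomial_conv_ffact_plus_one:
  fixes X Y c :: "'a::comm_ring_1"
  defines "F \<equiv> binomial_conv (ffact X) (\<lambda>k. c ^ k * ffact Y k)"
  shows "binomial_conv (ffact (X + 1)) (\<lambda>k. c ^ k * ffact (Y + 1) k) (Suc m) =
    (X + 1 + c * (Y + 1)) * F m + c * (X + 1 + (Y + 1)) * of_nat m * F (m - 1)"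
proof -
  let ?Q = "\<lambda>k. c ^ k * ffact Y k"
  have X_Suc: "(\<lambda>k. ffact (X + 1) (Suc k)) = (\<lambda>k. (X + 1) * ffact X k)"
    by (simp add: ffact_Suc)
  have Y_Suc: "(\<lambda>k. c ^ Suc k * ffact (Y + 1) (Suc k)) = (\<lambda>k. c * (Y + 1) * ?Q k)"
    by (simp add: ffact_Suc algebra_simps)
  have X_plus_one: "ffact (X + 1) = (\<lambda>k. ffact X k + of_nat k * ffact X (k - 1))"
    by (rule ext) (rule ffact_plus_one)
  have Y_plus_one: "(\<lambda>k. c ^ k * ffact (Y + 1) k) = (\<lambda>k. ?Q k + c * (of_nat k * ?Q (k - 1)))"
  proof
    show "c ^ k * ffact (Y + 1) k = ?Q k + c * (of_nat k * ?Q (k - 1))" for k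
      by (subst ffact_plus_one, cases k) (simp_all add: algebra_simps)
  qed
  have "binomial_conv (ffact (X + 1)) (\<lambda>k. c ^ k * ffact (Y + 1) k) (Suc m) =
      (X + 1) * binomial_conv (ffact X) (\<lambda>k. c ^ k * ffact (Y + 1) k) m +
      c * (Y + 1) * binomial_conv (ffact (X + 1)) ?Q m"
    by (simp only: binomial_conv_Suc X_Suc Y_Suc binomial_conv_scale_left binomial_conv_scale_right)
  also have "binomial_conv (ffact X) (\<lambda>k. c ^ k * ffact (Y + 1) k) m = F m + c * (of_nat m * F (m - 1))"
    using binomial_conv_shift_right[of "ffact X" ?Q m]
    by (simp only: F_def Y_plus_one binomial_conv_add_right binomial_conv_scale_right)
  also have "binomial_conv (ffact (X + 1)) ?Q m = F m + of_nat m * F (m - 1)"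
    using binomial_conv_shift_left[of "ffact X" ?Q m]
    by (simp only: F_def X_plus_one binomial_conv_add_left)
  finally show ?thesis
    by (simp add: algebra_simps)
qed

lemma ffact_smult_card:
  fixes R :: "'p::prime_card mod_ring"
  assumes "R \<noteq> 0"
  shows "ffact (smult R Z) CARD('p) = smult R (ffact Z CARD('p))"
proof -
  have "inj_on (of_nat :: nat \<Rightarrow> 'p mod_ring) {..<CARD('p)}"
    by (auto simp: inj_on_def of_nat_eq_iff_cong_CHAR cong_def)
  moreover have "(of_nat :: nat \<Rightarrow> 'p mod_ring) ` {..<CARD('p)} = UNIV"
    using surj_of_nat_mod_ring by fastforce
  ultimately have ffact_card: "ffact W CARD('p) = (\<Prod>y\<in>UNIV. W - [:y:])" for W :: "'p mod_ring poly"
    unfolding ffact_def of_nat_poly using prod.reindex[of of_nat "{..<CARD('p)}" "\<lambda>y. W - [:y:]"]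
    by simp
  have "(\<Prod>y\<in>UNIV. smult R Z - [:y:]) = (\<Prod>y\<in>UNIV. smult R (Z - [:y / R:]))"
    using assms by (intro prod.cong refl) (simp add: smult_diff_right)
  also have "\<dots> = smult (R ^ CARD('p)) (\<Prod>y\<in>UNIV. Z - [:y / R:])"
    by (simp add: prod_smult)
  also have "(\<Prod>y\<in>UNIV. Z - [:y / R:]) = (\<Prod>y\<in>UNIV. Z - [:y:])"
    using assms by (intro prod.reindex_bij_witness[where i="\<lambda>y. y * R" and j="\<lambda>y. y / R"]) auto
  finally show ?thesis
    unfolding ffact_card by simp
qed

lemma of_nat_fact_mod_ring_neq_0:
  assumes "k < CARD('p::prime_card)"
  shows "(of_nat (fact k) :: 'p mod_ring) \<noteq> 0"
  using assms prime_dvd_fact_iff[OF prime_card[where 'a='p]]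
  by (simp add: of_nat_eq_0_iff_char_dvd)

lemma pbinom_eq_ffact: "pbinom Z k = smult (inverse (of_nat (fact k))) (ffact Z k)"
  by (simp add: pbinom_def ffact_def)

lemma pbinom_plus_one:
  fixes Z :: "'a::field poly"
  assumes "(of_nat (fact k) :: 'a) \<noteq> 0"
  shows "pbinom (Z + 1) k = pbinom Z k + (if k = 0 then 0 else pbinom Z (k - 1))"
proof (cases k)
  case (Suc j)
  have "of_nat (fact (Suc j)) = (of_nat (Suc j) * of_nat (fact j) :: 'a)"
    by (simp only: fact_Suc of_nat_mult of_nat_id)
  then have "inverse (of_nat (fact (Suc j))) * of_nat (Suc j) = (inverse (of_nat (fact j)) :: 'a)"
    using assms Suc by (simp del: of_nat_Suc)
  then show ?thesis
    using Suc by (simp add: pbinom_eq_ffact ffact_plus_one smult_add_right of_nat_poly del: of_nat_Suc)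
qed (simp add: pbinom_eq_ffact)

definition vandermonde_sum :: "'a::field \<Rightarrow> 'a poly \<Rightarrow> 'a poly \<Rightarrow> nat \<Rightarrow> 'a poly" where
  "vandermonde_sum c X Y n = (\<Sum>k = 0..n. [:c ^ k:] * pbinom X (n - k) * pbinom Y k)"

lemma vandermonde_sum_plus_one:
  fixes c :: "'a::field"
  assumes "(of_nat (fact (Suc n)) :: 'a) \<noteq> 0"
  shows "vandermonde_sum c X (Y + 1) (Suc n) =
    vandermonde_sum c X Y (Suc n) + [:c:] * vandermonde_sum c X Y n"
proof -
  have "pbinom (Y + 1) k = pbinom Y k + (if k = 0 then 0 else pbinom Y (k - 1))" if "k \<le> Suc n" for k
  proof (rule pbinom_plus_one)
    show "(of_nat (fact k) :: 'a) \<noteq> 0"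
      using assms fact_dvd[OF that] by (metis dvdE mult_zero_left of_nat_mult)
  qed
  then have "vandermonde_sum c X (Y + 1) (Suc n) = vandermonde_sum c X Y (Suc n) +
      (\<Sum>k = 0..Suc n. [:c ^ k:] * pbinom X (Suc n - k) * (if k = 0 then 0 else pbinom Y (k - 1)))"
    unfolding vandermonde_sum_def sum.distrib[symmetric]
    by (intro sum.cong refl) (simp add: algebra_simps)
  also have "(\<Sum>k = 0..Suc n. [:c ^ k:] * pbinom X (Suc n - k) * (if k = 0 then 0 else pbinom Y (k - 1))) =
      [:c:] * vandermonde_sum c X Y n"
    unfolding vandermonde_sum_def
    by (subst sum.atLeast0_atMost_Suc_shift) (simp add: sum_distrib_left ac_simps)
  finally show ?thesis .
qed

lemma vandermonde_sum_eq_binomial_conv: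
  fixes c :: "'a::field"
  assumes "(of_nat (fact n) :: 'a) \<noteq> 0"
  shows "vandermonde_sum c X Y n =
    smult (inverse (of_nat (fact n))) (binomial_conv (ffact X) (\<lambda>k. [:c:] ^ k * ffact Y k) n)"
proof -
  have "[:c ^ j:] * pbinom X (n - j) * pbinom Y j =
      smult (inverse (of_nat (fact n))) (of_nat (n choose j) * ffact X (n - j) * ([:c:] ^ j * ffact Y j))"
    if "j \<le> n" for j
  proof -
    have fact_n: "(of_nat (fact n) :: 'a) = of_nat (fact j) * of_nat (fact (n - j)) * of_nat (n choose j)"
      using binomial_fact_lemma[OF that] by (metis of_nat_mult)
    then have "inverse (of_nat (fact (n - j))) * inverse (of_nat (fact j)) =
        inverse (of_nat (fact n)) * (of_nat (n choose j) :: 'a)"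
      using assms by (simp add: field_simps)
    then show ?thesis
      by (simp add: pbinom_eq_ffact of_nat_poly poly_const_pow ac_simps)
  qed
  then show ?thesis
    unfolding vandermonde_sum_def binomial_conv_def smult_sum2 atLeast0AtMost
    by (intro sum.cong refl) auto
qed

lemma vandermonde_sum_vanishes:
  fixes R S :: "'p::prime_card mod_ring"
  assumes "R \<noteq> 0" and "S \<noteq> 0" and "R + S \<noteq> 0" and "Z \<noteq> 0"
  shows "vandermonde_sum (- (R / S)) (smult R Z - 1) (smult S Z - 1) (CARD('p) - 2) = 0"
proof -
  let ?p = "CARD('p)"
  define C where "C = - (R / S)"
  define X where "X = smult R Z - 1"
  define Y where "Y = smult S Z - 1"
  define F where "F = binomial_conv (ffact X) (\<lambda>k. [:C:] ^ k * ffact Y k)"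
  have p_Suc_Suc: "?p = Suc (Suc (?p - 2))"
    using prime_ge_2_nat[OF prime_card[where 'a='p]] by linarith
  have RCS: "R + C * S = 0"
    using assms(2) by (simp add: C_def)
  have "binomial_conv (ffact (X + 1)) (\<lambda>k. [:C:] ^ k * ffact (Y + 1) k) ?p =
      ffact (smult R Z) ?p + [:C:] ^ ?p * ffact (smult S Z) ?p"
    by (subst binomial_conv_prime_char) (simp_all add: prime_card X_def Y_def of_nat_poly)
  also have "\<dots> = smult (R + C ^ ?p * S) (ffact Z ?p)"
    using assms(1,2) by (simp add: ffact_smult_card poly_const_pow smult_add_left mult.commute)
  finally have "binomial_conv (ffact (X + 1)) (\<lambda>k. [:C:] ^ k * ffact (Y + 1) k) ?p = 0"
    using RCS by simp
  moreover have "X + 1 + [:C:] * (Y + 1) = smult (R + C * S) Z" and "X + 1 + (Y + 1) = smult (R + S) Z"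
    by (simp_all add: X_def Y_def smult_add_left mult.commute)
  ultimately have "[:C:] * smult (R + S) Z * of_nat (?p - 1) * F (?p - 2) = 0"
    using binomial_conv_ffact_plus_one[of X "[:C:]" Y "?p - 1"] p_Suc_Suc RCS
    by (simp add: F_def numeral_2_eq_2 del: of_nat_diff)
  moreover have "(of_nat (?p - 1) :: 'p mod_ring poly) \<noteq> 0"
    using p_Suc_Suc by (auto simp add: of_nat_poly of_nat_eq_0_iff_char_dvd dest: dvd_imp_le)
  ultimately have "F (?p - 2) = 0"
    using assms by (simp add: C_def)
  then show ?thesis
    by (simp add: vandermonde_sum_eq_binomial_conv of_nat_fact_mod_ring_neq_0 C_def X_def Y_def F_def)
qed

theorem lemma17:
  fixes r s :: nat
  assumes "odd (CARD('p::prime_card))"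
    and "0 < r" and "r < CARD('p)" and "0 < s" and "s < CARD('p)"
    and "r + s \<noteq> CARD('p)"
  shows "(b_rs r s :: 'p mod_ring poly) =
    (\<Sum>k = 0..CARD('p) - 1.
      [:(- (of_nat r / of_nat s)) ^ k:]
      * pbinom (smult (of_nat r) [:0, 1:] - 1) (CARD('p) - 1 - k)
      * pbinom (smult (of_nat s) [:0, 1:]) k)"
proof -
  let ?p = "CARD('p)"
  let ?c = "- (of_nat r / of_nat s) :: 'p mod_ring"
  let ?X = "smult (of_nat r) [:0, 1:] - 1 :: 'p mod_ring poly"
  let ?Y = "smult (of_nat s) [:0, 1:] - 1 :: 'p mod_ring poly"
  have p_minus_1: "?p - 1 = Suc (?p - 2)"
    using prime_ge_2_nat[OF prime_card[where 'a='p]] by linarith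
  have not_dvd: "\<not> ?p dvd n" if "0 < n" "n < 2 * ?p" "n \<noteq> ?p" for n
    using that dvd_imp_le[of ?p "n - ?p"] by (cases "n < ?p") (auto dest: dvd_imp_le simp: dvd_diff_nat)
  have "(of_nat r :: 'p mod_ring) \<noteq> 0" "(of_nat s :: 'p mod_ring) \<noteq> 0"
      "(of_nat r + of_nat s :: 'p mod_ring) \<noteq> 0"
    using assms not_dvd[of r] not_dvd[of s] not_dvd[of "r + s"]
    by (simp_all flip: of_nat_add add: of_nat_eq_0_iff_char_dvd)
  then have "vandermonde_sum ?c ?X ?Y (?p - 2) = 0"
    by (intro vandermonde_sum_vanishes) simp_all
  moreover have "(b_rs r s :: 'p mod_ring poly) = vandermonde_sum ?c ?X ?Y (?p - 1)"
    by (simp add: b_rs_def vandermonde_sum_def)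
  moreover have "smult (of_nat s) [:0, 1:] = ?Y + 1"
    by simp
  ultimately show ?thesis
    using vandermonde_sum_plus_one[of "?p - 2" ?c ?X ?Y] p_minus_1
    by (simp add: vandermonde_sum_def of_nat_fact_mod_ring_neq_0)
qed

end
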